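(* Let $k>0$ and $H_n(x,y,u;k)=\sum_{w\in B_n}x^{\mathrm{exc}(w)}y^{\mathrm{aexc}(w)}u^{\mathrm{fix}(w)}k^{n-\mathrm{cyc}(w)}$ (with $H_0=1$). Then $$\sum_{n\ge0}H_n(x,y,u;k)\frac{z^n}{n!}=\left(\frac{(y-x)e^{kz(y+u-2x)}}{y-xe^{2kz(y-x)}}\right)^{1/k}.$$
   Context: $B_n$ is the hyperoctahedral group of signed permutations $w$ of $\pm[n]$ with $w(-i)=-w(i)$, written in standard cycle decomposition (each cycle starts with its element of largest absolute value, cycles ordered by increasing absolute value of first elements); $\mathrm{cyc}(w)$ is the number of cycles. For $i\in[n]$: $i$ is an excedance if $w(|w(i)|)>w(i)$; an anti-excedance if $w(i)=-i$ or $w(|w(i)|)<w(i)$; a fixed point if $w(i)=i$. $\mathrm{exc}(w)$, $\mathrm{aexc}(w)$, $\mathrm{fix}(w)$ denote their numbers. *)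

theory Defs
  imports "HOL-Combinatorics.Permutations" Complex_Main
begin

definition signed_perms :: "nat \<Rightarrow> (int \<Rightarrow> int) set" where
  "signed_perms n = {w. w permutes ({- int n..int n} - {0}) \<and> (\<forall>i. w (- i) = - w i)}"

definition exc :: "nat \<Rightarrow> (int \<Rightarrow> int) \<Rightarrow> nat" where
  "exc n w = card {i \<in> {1..int n}. w \<bar>w i\<bar> > w i}"

definition aexc :: "nat \<Rightarrow> (int \<Rightarrow> int) \<Rightarrow> nat" where
  "aexc n w = card {i \<in> {1..int n}. w i = - i \<or> w \<bar>w i\<bar> < w i}"

definition fixp :: "nat \<Rightarrow> (int \<Rightarrow> int) \<Rightarrow> nat" where
  "fixp n w = card {i \<in> {1..int n}. w i = i}"

text \<open>Number of cycles in the (standard) cycle decomposition: a cycle is the orbit of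
  some \<open>i \<in> [n]\<close> under \<open>w\<close>, considered up to signs of its entries.\<close>
definition cyc :: "nat \<Rightarrow> (int \<Rightarrow> int) \<Rightarrow> nat" where
  "cyc n w = card ((\<lambda>i. abs ` {(w ^^ m) i | m. True}) ` {1..int n})"

definition H :: "nat \<Rightarrow> real \<Rightarrow> real \<Rightarrow> real \<Rightarrow> real \<Rightarrow> real" where
  "H n x y u k = (\<Sum>w\<in>signed_perms n.
      x ^ exc n w * y ^ aexc n w * u ^ fixp n w * k ^ (n - cyc n w))"

end

(*
  Removing the letter n + 1 from a signed permutation of [n + 1] inverts inserting it, with
  either sign, either as a cycle of its own (weight u or y, one more cycle) or right after some
  p in [n] in the cycle of p. In the latter case the predecessor of p and p itself get the
  weights x and y while all other letters keep theirs, so the insertions after all p sum to a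
  derivative along (1, 1, 1):  H_(n+1) = (u + y) H_n + 2 k x y (d/dt) H_n(x + t, y + t, u + t).
  In the shift-invariant variables d = y - x and s = y + u - 2 x this is a recurrence for the
  coefficients of H_n as a polynomial in x, solved by
    [x^j] H_n = binom(-1/k, j) (-1/d)^j Delta^j (s + 2 k d m)^n |_(m = 0).
  The j-th finite difference has exponential generating function e^(s z) (e^(2 k d z) - 1)^j,
  the double series converges absolutely for small |z|, and summing over j first gives
  e^(s z) (1 - x (e^(2 k d z) - 1) / d)^(-1/k) by the binomial series.
*)

theory Submission
  imports Defs "HOL-Analysis.Infinite_Sum" "HOL-Analysis.Generalised_Binomial_Theorem"
begin

section \<open>Signed permutations and their weights\<close>

abbreviation signed_range :: "nat \<Rightarrow> int set" where
  "signed_range n \<equiv> {- int n..int n} - {0}"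

lemma signed_perms_permutes: "w \<in> signed_perms n \<Longrightarrow> w permutes signed_range n"
  by (simp add: signed_perms_def)

lemma signed_perms_minus: "w \<in> signed_perms n \<Longrightarrow> w (- i) = - w i"
  by (simp add: signed_perms_def)

lemma signed_perms_outside: "w \<in> signed_perms n \<Longrightarrow> int n < \<bar>i\<bar> \<Longrightarrow> w i = i"
  by (rule permutes_not_in[OF signed_perms_permutes]) auto

lemma signed_perms_inj: "w \<in> signed_perms n \<Longrightarrow> inj w"
  using permutes_inj[OF signed_perms_permutes] .

lemma signed_perms_abs_abs: "w \<in> signed_perms n \<Longrightarrow> \<bar>w \<bar>i\<bar>\<bar> = \<bar>w i\<bar>"
  by (cases "0 \<le> i") (simp_all add: signed_perms_minus)

lemma signed_perms_abs_mem:
  assumes "w \<in> signed_perms n" and "i \<in> {1..int n}"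
  shows "\<bar>w i\<bar> \<in> {1..int n}"
proof -
  have "w i \<in> signed_range n"
    using assms permutes_in_image[OF signed_perms_permutes[OF assms(1)], of i] by auto
  then show ?thesis by auto
qed

lemma signed_perms_abs_eq:
  assumes w: "w \<in> signed_perms n" and "\<bar>w i\<bar> = \<bar>w j\<bar>"
  shows "\<bar>i\<bar> = \<bar>j\<bar>"
proof -
  have "w i = w j \<or> w i = w (- j)"
    using assms(2) signed_perms_minus[OF w, of j] by arith
  then have "i = j \<or> i = - j"
    using inj_eq[OF signed_perms_inj[OF w]] by blast
  then show ?thesis
    by auto
qed

lemma signed_perms_abs_bij:
  assumes w: "w \<in> signed_perms n"
  shows "bij_betw (\<lambda>j. \<bar>w j\<bar>) {1..int n} {1..int n}"
proof -
  have inj: "inj_on (\<lambda>j. \<bar>w j\<bar>) {1..int n}"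
  proof (rule inj_onI)
    fix a b
    assume "a \<in> {1..int n}" "b \<in> {1..int n}" "\<bar>w a\<bar> = \<bar>w b\<bar>"
    then show "a = b"
      using signed_perms_abs_eq[OF w, of a b] by simp
  qed
  moreover have "(\<lambda>j. \<bar>w j\<bar>) ` {1..int n} = {1..int n}"
    by (rule endo_inj_surj[OF _ _ inj]) (auto intro: signed_perms_abs_mem[OF w])
  ultimately show ?thesis
    by (simp add: bij_betw_def)
qed

lemma signed_perms_0: "signed_perms 0 = {id}"
  by (auto simp: signed_perms_def)

lemma signed_perms_Suc: "w \<in> signed_perms n \<Longrightarrow> w \<in> signed_perms (Suc n)"
  unfolding signed_perms_def by (auto elim: permutes_subset)

lemma signed_perms_comp: "v \<in> signed_perms n \<Longrightarrow> w \<in> signed_perms n \<Longrightarrow> v \<circ> w \<in> signed_perms n"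
  unfolding signed_perms_def by (auto intro: permutes_compose)

lemma signed_perms_inv:
  assumes w: "w \<in> signed_perms n"
  shows "inv w \<in> signed_perms n"
proof -
  have perm: "w permutes signed_range n"
    by (rule signed_perms_permutes[OF w])
  have "inv w (- i) = - inv w i" for i
  proof -
    have "w (- inv w i) = - i"
      using signed_perms_minus[OF w, of "inv w i"] permutes_inverses(1)[OF perm] by simp
    then show ?thesis
      using permutes_inv_eq[OF perm] by blast
  qed
  then show ?thesis
    using permutes_inv[OF perm] by (simp add: signed_perms_def)
qed

lemma signed_perms_Suc_fixing:
  assumes w: "w \<in> signed_perms (Suc n)" and "w (int n + 1) = int n + 1"
  shows "w \<in> signed_perms n"
proof -
  have fixes_new: "w i = i" if "i \<in> signed_range (Suc n) - signed_range n" for i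
  proof -
    have "i = int n + 1 \<or> i = - (int n + 1)"
      using that by auto
    then show ?thesis
      using assms(2) signed_perms_minus[OF w, of "int n + 1"] by (elim disjE) simp_all
  qed
  have "w permutes signed_range n"
    by (rule permutes_superset[OF signed_perms_permutes[OF w] fixes_new])
  then show ?thesis
    using signed_perms_minus[OF w] by (simp add: signed_perms_def)
qed

definition letter_weight :: "real \<Rightarrow> real \<Rightarrow> real \<Rightarrow> (int \<Rightarrow> int) \<Rightarrow> int \<Rightarrow> real" where
  "letter_weight x y u w i =
     (if w i < w \<bar>w i\<bar> then x else if w i = - i \<or> w \<bar>w i\<bar> < w i then y else u)"

definition weight :: "nat \<Rightarrow> real \<Rightarrow> real \<Rightarrow> real \<Rightarrow> (int \<Rightarrow> int) \<Rightarrow> real" where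
  "weight n x y u w = (\<Prod>i\<in>{1..int n}. letter_weight x y u w i)"

lemma signed_perms_excedance_not_negated:
  assumes w: "w \<in> signed_perms n" and "w i < w \<bar>w i\<bar>"
  shows "w i \<noteq> - i"
proof
  assume wi: "w i = - i"
  show False
  proof (cases "0 \<le> i")
    case True
    then show False using assms(2) wi by simp
  next
    case False
    then have "w \<bar>w i\<bar> = i" using wi signed_perms_minus[OF w, of i] by simp
    then show False using assms(2) wi False by simp
  qed
qed

lemma signed_perms_fixed_iff:
  assumes w: "w \<in> signed_perms n" and "1 \<le> i"
  shows "w i = i \<longleftrightarrow> \<not> w i < w \<bar>w i\<bar> \<and> \<not> (w i = - i \<or> w \<bar>w i\<bar> < w i)"
proof
  assume "\<not> w i < w \<bar>w i\<bar> \<and> \<not> (w i = - i \<or> w \<bar>w i\<bar> < w i)"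
  moreover from this have "\<bar>w i\<bar> = i"
    using inj_eq[OF signed_perms_inj[OF w]] by fastforce
  ultimately show "w i = i" by arith
qed (use assms(2) in simp)

lemma monomial_eq_weight:
  assumes w: "w \<in> signed_perms n"
  shows "x ^ exc n w * y ^ aexc n w * u ^ fixp n w = weight n x y u w"
proof -
  let ?I = "{1..int n}"
  let ?E = "{i. w i < w \<bar>w i\<bar>}" and ?A = "{i. w i = - i \<or> w \<bar>w i\<bar> < w i}"
  have "weight n x y u w = (\<Prod>i\<in>?I \<inter> ?E. x) *
      (\<Prod>i\<in>?I \<inter> - ?E. if w i = - i \<or> w \<bar>w i\<bar> < w i then y else u)"
    unfolding weight_def letter_weight_def by (rule prod.If_cases) simp
  also have "(\<Prod>i\<in>?I \<inter> - ?E. if w i = - i \<or> w \<bar>w i\<bar> < w i then y else u)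
      = (\<Prod>i\<in>?I \<inter> - ?E \<inter> ?A. y) * (\<Prod>i\<in>?I \<inter> - ?E \<inter> - ?A. u)"
    by (rule prod.If_cases) simp
  also have "?I \<inter> ?E = {i \<in> ?I. w i < w \<bar>w i\<bar>}"
    by auto
  also have "?I \<inter> - ?E \<inter> ?A = {i \<in> ?I. w i = - i \<or> w \<bar>w i\<bar> < w i}"
    using signed_perms_excedance_not_negated[OF w] by auto
  also have "?I \<inter> - ?E \<inter> - ?A = {i \<in> ?I. w i = i}"
    using signed_perms_fixed_iff[OF w] by auto
  finally show ?thesis
    by (simp add: exc_def aexc_def fixp_def)
qed

lemma H_eq_sum_weight: "H n x y u k = (\<Sum>w\<in>signed_perms n. k ^ (n - cyc n w) * weight n x y u w)"
  unfolding H_def by (intro sum.cong refl) (simp add: monomial_eq_weight[symmetric] ac_simps)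

section \<open>Forward orbits\<close>

definition forward_orbit :: "('a \<Rightarrow> 'a) \<Rightarrow> 'a \<Rightarrow> 'a set" where
  "forward_orbit f a = range (\<lambda>m. (f ^^ m) a)"

lemma forward_orbit_self: "a \<in> forward_orbit f a"
  unfolding forward_orbit_def using range_eqI[of a "\<lambda>m. (f ^^ m) a" 0] by simp

lemma forward_orbit_step: "b \<in> forward_orbit f a \<Longrightarrow> f b \<in> forward_orbit f a"
  unfolding forward_orbit_def using range_eqI[of _ "\<lambda>m. (f ^^ m) a" "Suc _"] by auto

lemma forward_orbit_least:
  assumes "a \<in> T" and "f ` T \<subseteq> T"
  shows "forward_orbit f a \<subseteq> T"
proof -
  have "(f ^^ m) a \<in> T" for m
    by (induction m) (use assms in auto)
  then show ?thesis
    unfolding forward_orbit_def by auto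
qed

lemma forward_orbit_trans: "b \<in> forward_orbit f a \<Longrightarrow> forward_orbit f b \<subseteq> forward_orbit f a"
  by (rule forward_orbit_least) (auto intro: forward_orbit_step)

lemma forward_orbit_returns:
  assumes S: "finite S" and inj: "inj_on f S" and closed: "f ` S \<subseteq> S" and a: "a \<in> S"
  shows "a \<in> forward_orbit f (f a)"
proof -
  define g where "g x = (if x \<in> S then f x else x)" for x
  have "bij_betw f S S"
    using bij_betw_imageI[OF inj endo_inj_surj[OF S closed inj]] .
  then have "bij_betw g S S"
    by (rule bij_betw_cong[THEN iffD1, rotated]) (simp add: g_def)
  then have "g permutes S"
    by (rule bij_imp_permutes) (simp add: g_def)
  then have "permutation g"
    using S permutation_permutes by blast
  then obtain m where m: "0 < m" "(g ^^ m) a = a"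
    by (rule permutation_self)
  have "(g ^^ i) a = (f ^^ i) a \<and> (f ^^ i) a \<in> S" for i
    by (induction i) (use a closed in \<open>auto simp: g_def\<close>)
  then have "a = (f ^^ Suc (m - 1)) a"
    using m by simp
  also have "\<dots> = (f ^^ (m - 1)) (f a)"
    by (simp only: funpow_Suc_right o_apply)
  finally show ?thesis
    unfolding forward_orbit_def by (rule range_eqI)
qed

lemma forward_orbit_cong:
  assumes "a \<in> S" and "f ` S \<subseteq> S" and "\<And>b. b \<in> S \<Longrightarrow> g b = f b"
  shows "forward_orbit g a = forward_orbit f a"
proof -
  have "(g ^^ m) a = (f ^^ m) a \<and> (f ^^ m) a \<in> S" for m
    by (induction m) (use assms in auto)
  then show ?thesis
    unfolding forward_orbit_def by auto
qed

lemma card_orbits_insert_fixed_point: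
  assumes S: "finite S" and N: "N \<notin> S" and closed: "f ` S \<subseteq> S"
    and g: "\<And>b. b \<in> S \<Longrightarrow> g b = f b" and gN: "g N = N"
  shows "card (forward_orbit g ` insert N S) = Suc (card (forward_orbit f ` S))"
proof -
  have "forward_orbit g N \<subseteq> {N}"
    by (rule forward_orbit_least) (use gN in auto)
  then have "forward_orbit g N = {N}"
    using forward_orbit_self[of N g] by blast
  moreover have "forward_orbit g ` S = forward_orbit f ` S"
    using forward_orbit_cong[OF _ closed g] by simp
  moreover have "{N} \<notin> forward_orbit f ` S"
  proof
    assume "{N} \<in> forward_orbit f ` S"
    then obtain b where "b \<in> S" "{N} = forward_orbit f b" by blast
    then show False
      using forward_orbit_least[OF _ closed, of b] N by auto
  qed
  ultimately show ?thesis
    using S by (simp add: card_insert_if)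
qed

lemma forward_orbit_insert_after:
  assumes a: "a \<in> S" and N: "N \<notin> S" and closed: "f ` S \<subseteq> S" and p: "p \<in> S"
    and g: "\<And>b. b \<in> S \<Longrightarrow> g b = (if b = p then N else f b)" and gN: "g N = f p"
  shows "forward_orbit g a =
    (if p \<in> forward_orbit f a then insert N (forward_orbit f a) else forward_orbit f a)"
    (is "_ = ?O")
proof (rule antisym)
  have orbit_f: "forward_orbit f a \<subseteq> S"
    using forward_orbit_least[OF a closed] .
  show "forward_orbit g a \<subseteq> ?O"
  proof (rule forward_orbit_least)
    show "a \<in> ?O"
      using forward_orbit_self[of a f] by simp
    show "g ` ?O \<subseteq> ?O"
    proof clarify
      fix b assume b: "b \<in> ?O"
      show "g b \<in> ?O"
      proof (cases "b \<in> forward_orbit f a")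
        case True
        then have "b \<in> S"
          using orbit_f by blast
        then show ?thesis
          using g[of b] forward_orbit_step[OF True] True by auto
      next
        case False
        then have "b = N" "p \<in> forward_orbit f a"
          using b by (auto split: if_splits)
        then show ?thesis
          using gN forward_orbit_step[of p f a] by simp
      qed
    qed
  qed
next
  have "forward_orbit f a \<subseteq> forward_orbit g a \<inter> S"
  proof (rule forward_orbit_least)
    show "f ` (forward_orbit g a \<inter> S) \<subseteq> forward_orbit g a \<inter> S"
    proof clarify
      fix b assume b: "b \<in> forward_orbit g a" "b \<in> S"
      have "f b = (if b = p then g (g b) else g b)"
        using b(2) g[OF b(2)] g[OF p] gN by simp
      then show "f b \<in> forward_orbit g a \<inter> S"
        using b closed forward_orbit_step[of _ g a] by auto
    qed
  qed (use a forward_orbit_self in auto)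
  moreover have "p \<in> forward_orbit g a \<Longrightarrow> N \<in> forward_orbit g a"
    using forward_orbit_step[of p g a] g[OF p] by simp
  ultimately show "?O \<subseteq> forward_orbit g a"
    by auto
qed

lemma card_orbits_insert_after:
  assumes S: "finite S" and inj: "inj_on f S" and N: "N \<notin> S" and closed: "f ` S \<subseteq> S"
    and p: "p \<in> S"
    and g: "\<And>b. b \<in> S \<Longrightarrow> g b = (if b = p then N else f b)" and gN: "g N = f p"
  shows "card (forward_orbit g ` insert N S) = card (forward_orbit f ` S)"
proof -
  note orbit_g = forward_orbit_insert_after[OF _ N closed p g gN]
  define extend where "extend C = (if p \<in> C then insert N C else C)" for C
  have "N \<in> forward_orbit g p"
    using forward_orbit_step[OF forward_orbit_self[of p g]] g[OF p] by simp
  then have "forward_orbit g N \<subseteq> forward_orbit g p"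
    by (rule forward_orbit_trans)
  moreover have "forward_orbit g p \<subseteq> forward_orbit g N"
  proof -
    \<comment> \<open>the cycle of \<open>f\<close> through \<open>p\<close> returns to \<open>p\<close>, so \<open>p\<close> also follows \<open>N\<close> under \<open>g\<close>\<close>
    have "f p \<in> S"
      using closed p by blast
    then have "p \<in> forward_orbit g (f p)"
      using orbit_g forward_orbit_returns[OF S inj closed p] by simp
    moreover have "f p \<in> forward_orbit g N"
      using forward_orbit_step[OF forward_orbit_self[of N g]] gN by simp
    ultimately show ?thesis
      using forward_orbit_trans by (metis subset_trans)
  qed
  ultimately have "forward_orbit g ` insert N S = forward_orbit g ` S"
    using p by (simp add: insert_absorb)
  also have "\<dots> = extend ` forward_orbit f ` S"
    unfolding image_image extend_def by (rule image_cong[OF refl orbit_g])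
  also have "card \<dots> = card (forward_orbit f ` S)"
  proof (rule card_image, rule inj_onI)
    fix C C' assume C: "C \<in> forward_orbit f ` S" "C' \<in> forward_orbit f ` S"
      and eq: "extend C = extend C'"
    have "C \<subseteq> S" "C' \<subseteq> S"
      using C forward_orbit_least[OF _ closed] by auto
    then have "C = extend C - {N}" "C' = extend C' - {N}"
      using N by (auto simp: extend_def)
    then show "C = C'"
      using eq by simp
  qed
  finally show ?thesis .
qed

lemma cyc_eq_card_orbits:
  assumes w: "w \<in> signed_perms n"
  shows "cyc n w = card (forward_orbit (\<lambda>j. \<bar>w j\<bar>) ` {1..int n})"
proof -
  have abs_funpow: "\<bar>(w ^^ m) i\<bar> = ((\<lambda>j. \<bar>w j\<bar>) ^^ m) \<bar>i\<bar>" for m i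
  proof (induction m)
    case (Suc m)
    then show ?case
      using signed_perms_abs_abs[OF w, of "(w ^^ m) i"] by simp
  qed simp
  have "abs ` {(w ^^ m) i | m. True} = forward_orbit (\<lambda>j. \<bar>w j\<bar>) i" if "1 \<le> i" for i
  proof -
    have "abs ` {(w ^^ m) i | m. True} = range (\<lambda>m. \<bar>(w ^^ m) i\<bar>)"
      by auto
    then show ?thesis
      unfolding forward_orbit_def abs_funpow using that by simp
  qed
  then have "(\<lambda>i. abs ` {(w ^^ m) i | m. True}) ` {1..int n} =
      forward_orbit (\<lambda>j. \<bar>w j\<bar>) ` {1..int n}"
    by (intro image_cong) auto
  then show ?thesis
    unfolding cyc_def by simp
qed

lemma cyc_le: "w \<in> signed_perms n \<Longrightarrow> cyc n w \<le> n"
  using card_image_le[of "{1..int n}" "forward_orbit (\<lambda>j. \<bar>w j\<bar>)"]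
  by (simp add: cyc_eq_card_orbits)

section \<open>Inserting the letter \<open>n + 1\<close>\<close>

text \<open>\<open>insert_after n w e p\<close> maps \<open>p\<close> to \<open>n + 1\<close> (if \<open>e\<close>) or to \<open>-(n + 1)\<close>, and \<open>n + 1\<close> to
  \<open>w p\<close>: the new letter is inserted right after \<open>p\<close> in its cycle, or forms a cycle of its own
  when \<open>p = n + 1\<close>.\<close>

definition insertion_perm :: "nat \<Rightarrow> bool \<Rightarrow> int \<Rightarrow> int \<Rightarrow> int" where
  "insertion_perm n e p =
     (if e then id else Transposition.transpose (int n + 1) (- (int n + 1)))
     \<circ> Transposition.transpose p (int n + 1) \<circ> Transposition.transpose (- p) (- (int n + 1))"

definition insert_after :: "nat \<Rightarrow> (int \<Rightarrow> int) \<Rightarrow> bool \<Rightarrow> int \<Rightarrow> int \<Rightarrow> int" where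
  "insert_after n w e p = w \<circ> insertion_perm n e p"

lemma insertion_perm_signed_perms:
  assumes p: "p \<in> {1..int n + 1}"
  shows "insertion_perm n e p \<in> signed_perms (Suc n)"
proof -
  have "(if e then id else Transposition.transpose (int n + 1) (- (int n + 1)))
      permutes signed_range (Suc n)"
    by (auto intro: permutes_swap_id)
  then have "insertion_perm n e p permutes signed_range (Suc n)"
    unfolding insertion_perm_def using p by (intro permutes_compose permutes_swap_id) auto
  moreover have "insertion_perm n e p (- i) = - insertion_perm n e p i" for i
    using p unfolding insertion_perm_def Transposition.transpose_def by auto
  ultimately show ?thesis
    by (simp add: signed_perms_def)
qed

lemma insert_after_apply:
  assumes w: "w \<in> signed_perms n" and p: "p \<in> {1..int n + 1}"
  shows "insert_after n w e p i =
    (if i = p then (if e then int n + 1 else - (int n + 1))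
     else if i = - p then (if e then - (int n + 1) else int n + 1)
     else if i = int n + 1 then w p
     else if i = - (int n + 1) then - w p
     else w i)"
  using p signed_perms_outside[OF w, of "int n + 1"] signed_perms_outside[OF w, of "- (int n + 1)"]
    signed_perms_minus[OF w, of p]
  unfolding insert_after_def insertion_perm_def Transposition.transpose_def
  by auto

lemma insert_after_signed_perms:
  "w \<in> signed_perms n \<Longrightarrow> p \<in> {1..int n + 1} \<Longrightarrow> insert_after n w e p \<in> signed_perms (Suc n)"
  unfolding insert_after_def by (intro signed_perms_comp signed_perms_Suc insertion_perm_signed_perms)

lemma insert_after_inv:
  assumes "p \<in> {1..int n + 1}"
  shows "insert_after n w e p \<circ> inv (insertion_perm n e p) = w"
  using permutes_inv_o(1)[OF signed_perms_permutes[OF insertion_perm_signed_perms[OF assms]]]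
  by (simp add: insert_after_def comp_assoc)

lemma insert_after_abs_eq_iff:
  assumes w: "w \<in> signed_perms n" and p: "p \<in> {1..int n + 1}" and q: "q \<in> {1..int n + 1}"
  shows "\<bar>insert_after n w e p q\<bar> = int n + 1 \<longleftrightarrow> q = p"
proof -
  have "\<bar>w i\<bar> \<le> int n" if "i \<in> {1..int n + 1}" "i \<noteq> int n + 1" for i
    using signed_perms_abs_mem[OF w, of i] that by simp
  from this[OF p] this[OF q] show ?thesis
    using p q unfolding insert_after_apply[OF w p] by auto
qed

lemma insert_after_eq_imp_eq:
  assumes w: "w \<in> signed_perms n" and w': "w' \<in> signed_perms n"
    and p: "p \<in> {1..int n + 1}" and p': "p' \<in> {1..int n + 1}"
    and eq: "insert_after n w e p = insert_after n w' e' p'"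
  shows "w = w' \<and> e = e' \<and> p = p'"
proof -
  have "\<bar>insert_after n w e p p'\<bar> = int n + 1"
    using insert_after_abs_eq_iff[OF w' p' p'] eq by simp
  then have "p = p'"
    using insert_after_abs_eq_iff[OF w p p'] by simp
  moreover have "e = e'"
  proof -
    have "(if e then int n + 1 else - (int n + 1)) = insert_after n w e p p"
      by (simp add: insert_after_apply[OF w p])
    also have "\<dots> = insert_after n w' e' p' p'"
      using eq \<open>p = p'\<close> by simp
    also have "\<dots> = (if e' then int n + 1 else - (int n + 1))"
      by (simp add: insert_after_apply[OF w' p'])
    finally show ?thesis
      by (cases e; cases e') simp_all
  qed
  moreover have "w = w'"
  proof -
    have "w = insert_after n w e p \<circ> inv (insertion_perm n e p)"
      by (rule insert_after_inv[OF p, symmetric])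
    also have "\<dots> = insert_after n w' e' p' \<circ> inv (insertion_perm n e' p')"
      using eq \<open>p = p'\<close> \<open>e = e'\<close> by simp
    also have "\<dots> = w'"
      by (rule insert_after_inv[OF p'])
    finally show ?thesis .
  qed
  ultimately show ?thesis
    by simp
qed

lemma insert_after_surj:
  assumes v: "v \<in> signed_perms (Suc n)"
  obtains w e p where "w \<in> signed_perms n" "p \<in> {1..int n + 1}" "v = insert_after n w e p"
proof -
  define N where "N = int n + 1"
  obtain q where q: "v q = N"
    using permutes_surj[OF signed_perms_permutes[OF v]] by (metis surj_def)
  have "q \<in> signed_range (Suc n)"
    using q permutes_not_in[OF signed_perms_permutes[OF v], of q] by (cases "q = N") (auto simp: N_def)
  then have p: "\<bar>q\<bar> \<in> {1..int n + 1}"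
    by auto
  define \<sigma> where "\<sigma> = insertion_perm n (0 < q) \<bar>q\<bar>"
  have \<sigma>: "\<sigma> \<in> signed_perms (Suc n)"
    unfolding \<sigma>_def by (rule insertion_perm_signed_perms[OF p])
  \<comment> \<open>\<open>\<sigma>\<close> moves \<open>q\<close> to \<open>n + 1\<close>, so undoing it from \<open>v\<close> leaves \<open>n + 1\<close> fixed\<close>
  have "\<sigma> q = N"
    using p unfolding \<sigma>_def insertion_perm_def Transposition.transpose_def N_def by auto
  then have "inv \<sigma> N = q"
    using permutes_inv_eq[OF signed_perms_permutes[OF \<sigma>]] by blast
  then have "(v \<circ> inv \<sigma>) (int n + 1) = int n + 1"
    using q by (simp add: N_def)
  with signed_perms_comp[OF v signed_perms_inv[OF \<sigma>]] have "v \<circ> inv \<sigma> \<in> signed_perms n"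
    by (rule signed_perms_Suc_fixing)
  moreover have "v = insert_after n (v \<circ> inv \<sigma>) (0 < q) \<bar>q\<bar>"
    using permutes_inv_o(2)[OF signed_perms_permutes[OF \<sigma>]]
    by (simp add: insert_after_def \<sigma>_def[symmetric] comp_assoc)
  ultimately show ?thesis
    using that p by blast
qed

lemma bij_betw_insert_after:
  "bij_betw (\<lambda>(w, e, p). insert_after n w e p)
     (signed_perms n \<times> UNIV \<times> {1..int n + 1}) (signed_perms (Suc n))"
proof (rule bij_betw_imageI)
  show "inj_on (\<lambda>(w, e, p). insert_after n w e p) (signed_perms n \<times> UNIV \<times> {1..int n + 1})"
    by (rule inj_onI) (auto dest: insert_after_eq_imp_eq)
  show "(\<lambda>(w, e, p). insert_after n w e p) ` (signed_perms n \<times> UNIV \<times> {1..int n + 1}) =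
      signed_perms (Suc n)" (is "?f ` ?A = _")
  proof
    show "?f ` ?A \<subseteq> signed_perms (Suc n)"
      by (auto intro: insert_after_signed_perms)
    show "signed_perms (Suc n) \<subseteq> ?f ` ?A"
    proof
      fix v assume "v \<in> signed_perms (Suc n)"
      then obtain w e p where "w \<in> signed_perms n" "p \<in> {1..int n + 1}" "v = insert_after n w e p"
        by (rule insert_after_surj)
      then show "v \<in> ?f ` ?A"
        by force
    qed
  qed
qed

lemma letter_weight_cong:
  assumes "v a = w i" and "v \<bar>w i\<bar> = w \<bar>w i\<bar>" and "v a = - a \<longleftrightarrow> w i = - i"
  shows "letter_weight x y u v a = letter_weight x y u w i"
  using assms by (simp add: letter_weight_def)

lemma atLeastAtMost_Suc_insert: "{1..int (Suc n)} = insert (int n + 1) {1..int n}"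
  by auto

lemma weight_insert_fixed_point:
  assumes w: "w \<in> signed_perms n"
  shows "weight (Suc n) x y u (insert_after n w e (int n + 1)) = (if e then u else y) * weight n x y u w"
proof -
  define N where "N = int n + 1"
  let ?v = "insert_after n w e N"
  have v: "?v i = (if i = N then (if e then N else - N) else if i = - N then (if e then - N else N)
      else w i)" for i
    using insert_after_apply[OF w, of N e i] by (simp add: N_def)
  have N: "int n < N"
    by (simp add: N_def)
  have "letter_weight x y u ?v i = letter_weight x y u w i" if "i \<in> {1..int n}" for i
    using that signed_perms_abs_mem[OF w that] N by (intro letter_weight_cong) (auto simp: v)
  then have "(\<Prod>i\<in>{1..int n}. letter_weight x y u ?v i) = weight n x y u w"
    unfolding weight_def by (rule prod.cong[OF refl])
  moreover have "letter_weight x y u ?v N = (if e then u else y)"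
    unfolding letter_weight_def v using N by simp
  moreover have "N \<notin> {1..int n}"
    using N by simp
  ultimately show ?thesis
    unfolding weight_def atLeastAtMost_Suc_insert N_def[symmetric] by simp
qed

lemma prod_insert_after_reindex:
  fixes f :: "int \<Rightarrow> 'a::comm_monoid_mult"
  assumes p: "p \<in> {1..int n}" and j: "j \<in> {1..int n}"
  defines "\<psi> \<equiv> \<lambda>i. if i = p then int n + 1 else i"
  shows "(\<Prod>i\<in>{1..int (Suc n)}. f i) = f (\<psi> j) * f p * (\<Prod>i\<in>{1..int n} - {j}. f (\<psi> i))"
proof -
  have inj: "inj_on \<psi> {1..int n}"
    by (auto simp: \<psi>_def inj_on_def)
  have "{1..int (Suc n)} = insert (\<psi> j) (insert p (\<psi> ` ({1..int n} - {j})))"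
  proof (intro antisym subsetI)
    fix k assume k: "k \<in> {1..int (Suc n)}"
    consider "k = int n + 1" | "k = p" | "k \<in> {1..int n} - {p}"
      using k by fastforce
    then show "k \<in> insert (\<psi> j) (insert p (\<psi> ` ({1..int n} - {j})))"
    proof cases
      case 1
      then show ?thesis
        using p by (cases "j = p") (auto simp: \<psi>_def)
    next
      case 3
      then have "k = \<psi> k"
        by (simp add: \<psi>_def)
      then show ?thesis
        using 3 by (cases "k = j") auto
    qed simp
  qed (use j p in \<open>auto simp: \<psi>_def\<close>)
  moreover have "\<psi> j \<notin> insert p (\<psi> ` ({1..int n} - {j}))"
  proof -
    have "\<psi> j \<noteq> p"
      using p by (simp add: \<psi>_def)
    moreover have "\<psi> j \<notin> \<psi> ` ({1..int n} - {j})"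
      using inj j by (subst inj_on_image_mem_iff) auto
    ultimately show ?thesis
      by simp
  qed
  moreover have "p \<notin> \<psi> ` ({1..int n} - {j})"
    using p by (auto simp: \<psi>_def)
  moreover have "inj_on \<psi> ({1..int n} - {j})"
    using inj by (rule inj_on_subset) auto
  ultimately show ?thesis
    by (simp add: prod.reindex mult.assoc)
qed

lemma letter_weight_insert_after_unchanged:
  assumes w: "w \<in> signed_perms n" and j: "j \<in> {1..int n}" and i: "i \<in> {1..int n} - {j}"
  defines "p \<equiv> \<bar>w j\<bar>"
  shows "letter_weight x y u (insert_after n w e p) (if i = p then int n + 1 else i) =
    letter_weight x y u w i"
proof -
  let ?N = "int n + 1" and ?v = "insert_after n w e p"
  have p: "p \<in> {1..int n}"
    unfolding p_def by (rule signed_perms_abs_mem[OF w j])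
  have abs_w: "\<bar>w i\<bar> \<in> {1..int n}" if "i \<in> {1..int n}" for i
    by (rule signed_perms_abs_mem[OF w that])
  have abs_w_eq_p: "\<bar>w i\<bar> = p \<longleftrightarrow> i = j" if "i \<in> {1..int n}" for i
    using signed_perms_abs_eq[OF w, of i j] that j unfolding p_def by auto
  have v: "?v i = (if i = p then (if e then ?N else - ?N) else if i = - p then (if e then - ?N else ?N)
      else if i = ?N then w p else if i = - ?N then - w p else w i)" for i
    using insert_after_apply[OF w, of p e i] p by simp
  show ?thesis
  proof (rule letter_weight_cong)
    show v_i: "?v (if i = p then ?N else i) = w i"
      using i p by (auto simp: v)
    show "?v \<bar>w i\<bar> = w \<bar>w i\<bar>"
      using i abs_w[of i] abs_w_eq_p[of i] p by (auto simp: v)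
    have "w p \<noteq> - p" "w p \<noteq> - ?N" if "i = p"
      using that i abs_w_eq_p[OF p] abs_w[OF p] p by force+
    then have "w i = - (if i = p then ?N else i) \<longleftrightarrow> w i = - i"
      by auto
    then show "?v (if i = p then ?N else i) = - (if i = p then ?N else i) \<longleftrightarrow> w i = - i"
      unfolding v_i .
  qed
qed

lemma letter_weights_insert_after_changed:
  assumes w: "w \<in> signed_perms n" and j: "j \<in> {1..int n}"
  defines "p \<equiv> \<bar>w j\<bar>"
  shows "letter_weight x y u (insert_after n w e p) (if j = p then int n + 1 else j) *
    letter_weight x y u (insert_after n w e p) p = x * y"
proof -
  let ?N = "int n + 1" and ?v = "insert_after n w e p"
  have p: "p \<in> {1..int n}"
    unfolding p_def by (rule signed_perms_abs_mem[OF w j])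
  have bounds: "- int n \<le> w i \<and> w i \<le> int n" if "i \<in> {1..int n}" for i
    using signed_perms_abs_mem[OF w that] by auto
  have v: "?v i = (if i = p then (if e then ?N else - ?N) else if i = - p then (if e then - ?N else ?N)
      else if i = ?N then w p else if i = - ?N then - w p else w i)" for i
    using insert_after_apply[OF w, of p e i] p by simp
  \<comment> \<open>the letter before \<open>p\<close> in its cycle is still mapped to \<open>w j\<close>, now followed by \<open>\<plusminus>(n + 1)\<close>\<close>
  have pred: "?v (if j = p then ?N else j) = w j"
    using j p by (auto simp: v)
  have at_p: "?v p = (if e then ?N else - ?N)" and at_N: "?v ?N = w p"
    using p by (simp_all add: v)
  have before: "letter_weight x y u ?v (if j = p then ?N else j) = (if e then x else y)"
    using pred at_p bounds[OF j] by (cases e) (simp_all add: letter_weight_def p_def)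
  have abs_at_p: "\<bar>?v p\<bar> = ?N"
    by (simp add: at_p)
  have at: "letter_weight x y u ?v p = (if e then y else x)"
    unfolding letter_weight_def abs_at_p at_N using at_p bounds[OF p] p by (cases e) simp_all
  show ?thesis
    unfolding before at by simp
qed

lemma weight_insert_after:
  assumes w: "w \<in> signed_perms n" and j: "j \<in> {1..int n}"
  shows "weight (Suc n) x y u (insert_after n w e \<bar>w j\<bar>) =
    x * y * (\<Prod>i\<in>{1..int n} - {j}. letter_weight x y u w i)"
proof -
  let ?p = "\<bar>w j\<bar>"
  let ?f = "letter_weight x y u (insert_after n w e ?p)"
  \<comment> \<open>each letter \<open>i \<noteq> j\<close> of \<open>w\<close> keeps its weight, moved to \<open>n + 1\<close> if \<open>i = p\<close>\<close>
  have "weight (Suc n) x y u (insert_after n w e ?p) =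
      ?f (if j = ?p then int n + 1 else j) * ?f ?p * (\<Prod>i\<in>{1..int n} - {j}. ?f (if i = ?p then int n + 1 else i))"
    unfolding weight_def by (rule prod_insert_after_reindex[OF signed_perms_abs_mem[OF w j] j])
  also have "(\<Prod>i\<in>{1..int n} - {j}. ?f (if i = ?p then int n + 1 else i)) =
      (\<Prod>i\<in>{1..int n} - {j}. letter_weight x y u w i)"
    by (rule prod.cong[OF refl letter_weight_insert_after_unchanged[OF w j]])
  finally show ?thesis
    unfolding letter_weights_insert_after_changed[OF w j] .
qed

lemma cyc_insert_fixed_point:
  assumes w: "w \<in> signed_perms n"
  shows "cyc (Suc n) (insert_after n w e (int n + 1)) = Suc (cyc n w)"
proof -
  let ?N = "int n + 1"
  let ?v = "insert_after n w e ?N"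
  have v: "insert_after n w e' ?N i =
      (if i = ?N then (if e' then ?N else - ?N) else if i = - ?N then (if e' then - ?N else ?N) else w i)"
    for e' i
    using insert_after_apply[OF w, of ?N e' i] by simp
  have N: "int n < ?N"
    by simp
  have v_perm: "?v \<in> signed_perms (Suc n)"
    by (rule insert_after_signed_perms[OF w]) simp
  have "card (forward_orbit (\<lambda>j. \<bar>?v j\<bar>) ` insert ?N {1..int n}) =
      Suc (card (forward_orbit (\<lambda>j. \<bar>w j\<bar>) ` {1..int n}))"
    by (rule card_orbits_insert_fixed_point) (use N in \<open>auto simp: v intro: signed_perms_abs_mem[OF w]\<close>)
  then show ?thesis
    unfolding cyc_eq_card_orbits[OF w] cyc_eq_card_orbits[OF v_perm] atLeastAtMost_Suc_insert .
qed

lemma cyc_insert_after: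
  assumes w: "w \<in> signed_perms n" and p: "p \<in> {1..int n}"
  shows "cyc (Suc n) (insert_after n w e p) = cyc n w"
proof -
  let ?N = "int n + 1"
  let ?v = "insert_after n w e p"
  have v: "insert_after n w e' p i =
      (if i = p then (if e' then ?N else - ?N) else if i = - p then (if e' then - ?N else ?N)
       else if i = ?N then w p else if i = - ?N then - w p else w i)" for e' i
    using insert_after_apply[OF w, of p e' i] p by simp
  have v_perm: "?v \<in> signed_perms (Suc n)"
    by (rule insert_after_signed_perms[OF w]) (use p in simp)
  have "card (forward_orbit (\<lambda>j. \<bar>?v j\<bar>) ` insert ?N {1..int n}) =
      card (forward_orbit (\<lambda>j. \<bar>w j\<bar>) ` {1..int n})"
  proof (rule card_orbits_insert_after)
    show "inj_on (\<lambda>j. \<bar>w j\<bar>) {1..int n}"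
      using signed_perms_abs_bij[OF w] by (rule bij_betw_imp_inj_on)
    show "(\<lambda>j. \<bar>w j\<bar>) ` {1..int n} \<subseteq> {1..int n}"
      using signed_perms_abs_mem[OF w] by blast
    show "\<bar>?v b\<bar> = (if b = p then ?N else \<bar>w b\<bar>)" if "b \<in> {1..int n}" for b
      using that p by (simp add: v)
    show "\<bar>?v ?N\<bar> = \<bar>w p\<bar>"
      using p by (simp add: v)
  qed (use p in simp_all)
  then show ?thesis
    unfolding cyc_eq_card_orbits[OF w] cyc_eq_card_orbits[OF v_perm] atLeastAtMost_Suc_insert .
qed

section \<open>The recurrence for \<open>H\<close>\<close>

lemma sum_insert_after:
  assumes w: "w \<in> signed_perms n"
  shows "(\<Sum>e\<in>UNIV. \<Sum>p\<in>{1..int n + 1}.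
      k ^ (Suc n - cyc (Suc n) (insert_after n w e p)) * weight (Suc n) x y u (insert_after n w e p)) =
    k ^ (n - cyc n w) * ((u + y) * weight n x y u w +
      2 * k * x * y * (\<Sum>j\<in>{1..int n}. \<Prod>i\<in>{1..int n} - {j}. letter_weight x y u w i))"
proof -
  define G where "G e p = k ^ (Suc n - cyc (Suc n) (insert_after n w e p)) *
      weight (Suc n) x y u (insert_after n w e p)" for e p
  define D where "D = (\<Sum>j\<in>{1..int n}. \<Prod>i\<in>{1..int n} - {j}. letter_weight x y u w i)"
  have Suc_diff: "Suc n - cyc n w = Suc (n - cyc n w)"
    using cyc_le[OF w] by simp
  have fixed_point: "G e (int n + 1) = k ^ (n - cyc n w) * ((if e then u else y) * weight n x y u w)"
    for e
    by (simp add: G_def cyc_insert_fixed_point[OF w] weight_insert_fixed_point[OF w])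
  have after: "(\<Sum>p\<in>{1..int n}. G e p) = k ^ (n - cyc n w) * (k * x * y * D)" for e
  proof -
    have "(\<Sum>p\<in>{1..int n}. G e p) = (\<Sum>j\<in>{1..int n}. G e \<bar>w j\<bar>)"
      using sum.reindex_bij_betw[OF signed_perms_abs_bij[OF w], of "G e"] by simp
    also have "\<dots> = (\<Sum>j\<in>{1..int n}. k ^ (n - cyc n w) * (k * x * y *
        (\<Prod>i\<in>{1..int n} - {j}. letter_weight x y u w i)))"
    proof (rule sum.cong[OF refl])
      fix j assume j: "j \<in> {1..int n}"
      show "G e \<bar>w j\<bar> = k ^ (n - cyc n w) * (k * x * y *
          (\<Prod>i\<in>{1..int n} - {j}. letter_weight x y u w i))"
        unfolding G_def weight_insert_after[OF w j]
          cyc_insert_after[OF w signed_perms_abs_mem[OF w j]] Suc_diff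
        by simp
    qed
    finally show ?thesis
      by (simp add: D_def sum_distrib_left)
  qed
  have "{1..int n + 1} = insert (int n + 1) {1..int n}"
    by auto
  then have "(\<Sum>e\<in>UNIV. \<Sum>p\<in>{1..int n + 1}. G e p) =
      (\<Sum>e\<in>UNIV. G e (int n + 1) + (\<Sum>p\<in>{1..int n}. G e p))"
    by simp
  also have "\<dots> = k ^ (n - cyc n w) * ((u + y) * weight n x y u w + 2 * k * x * y * D)"
    using fixed_point[of True] fixed_point[of False] after[of True] after[of False]
    by (simp add: UNIV_bool algebra_simps)
  finally show ?thesis
    by (simp add: G_def D_def)
qed

lemma H_Suc_eq_sum:
  "H (Suc n) x y u k = (\<Sum>w\<in>signed_perms n. k ^ (n - cyc n w) * ((u + y) * weight n x y u w +
      2 * k * x * y * (\<Sum>j\<in>{1..int n}. \<Prod>i\<in>{1..int n} - {j}. letter_weight x y u w i)))"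
proof -
  define F where "F v = k ^ (Suc n - cyc (Suc n) v) * weight (Suc n) x y u v" for v
  have "H (Suc n) x y u k = (\<Sum>v\<in>signed_perms (Suc n). F v)"
    by (simp add: H_eq_sum_weight F_def)
  also have "\<dots> = (\<Sum>(w, e, p)\<in>signed_perms n \<times> UNIV \<times> {1..int n + 1}. F (insert_after n w e p))"
    using sum.reindex_bij_betw[OF bij_betw_insert_after, of F n] by (simp add: case_prod_beta)
  also have "\<dots> = (\<Sum>w\<in>signed_perms n. \<Sum>e\<in>UNIV. \<Sum>p\<in>{1..int n + 1}. F (insert_after n w e p))"
    by (simp add: sum.cartesian_product)
  also have "\<dots> = (\<Sum>w\<in>signed_perms n. k ^ (n - cyc n w) * ((u + y) * weight n x y u w +
      2 * k * x * y * (\<Sum>j\<in>{1..int n}. \<Prod>i\<in>{1..int n} - {j}. letter_weight x y u w i)))"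
    unfolding F_def by (intro sum.cong refl sum_insert_after)
  finally show ?thesis .
qed

text \<open>Shifting \<open>x, y, u\<close> by \<open>t\<close> adds \<open>t\<close> to every letter weight.\<close>

lemma weight_shift_has_derivative:
  "((\<lambda>t. weight n (x + t) (y + t) (u + t) w) has_real_derivative
     (\<Sum>j\<in>{1..int n}. \<Prod>i\<in>{1..int n} - {j}. letter_weight x y u w i)) (at 0)"
proof -
  have shift: "weight n (x + t) (y + t) (u + t) w = (\<Prod>i\<in>{1..int n}. letter_weight x y u w i + t)" for t
    unfolding weight_def letter_weight_def by (rule prod.cong) auto
  have "((\<lambda>t. \<Prod>i\<in>{1..int n}. letter_weight x y u w i + t) has_derivative
      (\<lambda>h. \<Sum>j\<in>{1..int n}. h * (\<Prod>i\<in>{1..int n} - {j}. letter_weight x y u w i + 0))) (at 0)"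
    by (rule has_derivative_prod) (auto intro!: derivative_eq_intros)
  moreover have "(\<lambda>h. \<Sum>j\<in>{1..int n}. h * (\<Prod>i\<in>{1..int n} - {j}. letter_weight x y u w i + 0)) =
      (*) (\<Sum>j\<in>{1..int n}. \<Prod>i\<in>{1..int n} - {j}. letter_weight x y u w i)"
    by (rule ext) (simp add: sum_distrib_left mult.commute)
  ultimately show ?thesis
    unfolding shift has_field_derivative_def by simp
qed

lemma H_Suc:
  "H (Suc n) x y u k =
     (u + y) * H n x y u k + 2 * k * x * y * deriv (\<lambda>t. H n (x + t) (y + t) (u + t) k) 0"
proof -
  define D where "D w = (\<Sum>j\<in>{1..int n}. \<Prod>i\<in>{1..int n} - {j}. letter_weight x y u w i)" for w
  have "((\<lambda>t. H n (x + t) (y + t) (u + t) k) has_real_derivative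
      (\<Sum>w\<in>signed_perms n. k ^ (n - cyc n w) * D w)) (at 0)"
    unfolding H_eq_sum_weight D_def by (intro DERIV_sum DERIV_cmult weight_shift_has_derivative)
  then have deriv: "deriv (\<lambda>t. H n (x + t) (y + t) (u + t) k) 0 =
      (\<Sum>w\<in>signed_perms n. k ^ (n - cyc n w) * D w)"
    by (rule DERIV_imp_deriv)
  have "H (Suc n) x y u k =
      (\<Sum>w\<in>signed_perms n. k ^ (n - cyc n w) * ((u + y) * weight n x y u w + 2 * k * x * y * D w))"
    unfolding H_Suc_eq_sum D_def ..
  also have "\<dots> = (u + y) * H n x y u k + 2 * k * x * y * (\<Sum>w\<in>signed_perms n. k ^ (n - cyc n w) * D w)"
    by (simp add: H_eq_sum_weight sum_distrib_left sum.distrib algebra_simps)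
  finally show ?thesis
    unfolding deriv .
qed

section \<open>The coefficients of \<open>H\<^sub>n\<close> as a polynomial in \<open>x\<close>\<close>

text \<open>In the variables \<open>d = y - x\<close> and \<open>s = y + u - 2 x\<close>, which are invariant under the shift in
  \<open>H_Suc\<close>, the recurrence reads \<open>H\<^sub>n\<^sub>+\<^sub>1 = (s + 2 x) H\<^sub>n + 2 k x (x + d) H\<^sub>n'\<close> with \<open>'\<close> the
  derivative in \<open>x\<close>; \<open>hcoeff k d s n j\<close> is the coefficient of \<open>x\<^sup>j\<close> in \<open>H\<^sub>n\<close>.\<close>

fun hcoeff :: "real \<Rightarrow> real \<Rightarrow> real \<Rightarrow> nat \<Rightarrow> nat \<Rightarrow> real" where
  "hcoeff k d s 0 j = (if j = 0 then 1 else 0)"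
| "hcoeff k d s (Suc n) j = (s + 2 * k * d * real j) * hcoeff k d s n j
     + (if j = 0 then 0 else 2 * (1 + k * (real j - 1)) * hcoeff k d s n (j - 1))"

lemma hcoeff_eq_0: "n < j \<Longrightarrow> hcoeff k d s n j = 0"
  by (induction n arbitrary: j) auto

lemma hcoeff_poly_Suc:
  "(s + 2 * x) * (\<Sum>j\<le>n. hcoeff k d s n j * x ^ j)
     + 2 * k * x * (x + d) * (\<Sum>j\<le>n. hcoeff k d s n j * (real j * x ^ (j - 1)))
   = (\<Sum>j\<le>Suc n. hcoeff k d s (Suc n) j * x ^ j)"
proof -
  let ?h = "hcoeff k d s n"
  have x_deriv: "x * (real j * x ^ (j - 1)) = real j * x ^ j" for j
    by (cases j) auto
  have "(s + 2 * x) * (?h j * x ^ j) + 2 * k * x * (x + d) * (?h j * (real j * x ^ (j - 1))) =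
      (s + 2 * k * d * real j) * ?h j * x ^ j + 2 * (1 + k * real j) * ?h j * x ^ Suc j" for j
  proof -
    have "2 * k * x * (x + d) * (?h j * (real j * x ^ (j - 1))) =
        2 * k * (x + d) * ?h j * (x * (real j * x ^ (j - 1)))"
      by (simp only: ac_simps)
    then show ?thesis
      unfolding x_deriv by (simp add: algebra_simps)
  qed
  then have "(s + 2 * x) * (\<Sum>j\<le>n. ?h j * x ^ j) + 2 * k * x * (x + d) * (\<Sum>j\<le>n. ?h j * (real j * x ^ (j - 1)))
      = (\<Sum>j\<le>n. (s + 2 * k * d * real j) * ?h j * x ^ j) + (\<Sum>j\<le>n. 2 * (1 + k * real j) * ?h j * x ^ Suc j)"
    by (simp add: sum_distrib_left sum.distrib[symmetric])
  also have "(\<Sum>j\<le>n. (s + 2 * k * d * real j) * ?h j * x ^ j) =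
      (\<Sum>j\<le>Suc n. (s + 2 * k * d * real j) * ?h j * x ^ j)"
    by (simp add: hcoeff_eq_0)
  also have "(\<Sum>j\<le>n. 2 * (1 + k * real j) * ?h j * x ^ Suc j) =
      (\<Sum>j\<le>Suc n. (if j = 0 then 0 else 2 * (1 + k * (real j - 1)) * ?h (j - 1)) * x ^ j)"
    by (subst sum.atMost_Suc_shift) simp
  finally show ?thesis
    by (simp add: sum.distrib[symmetric] algebra_simps)
qed

lemma H_eq_hcoeff_poly: "H n x y u k = (\<Sum>j\<le>n. hcoeff k (y - x) (y + u - 2 * x) n j * x ^ j)"
proof (induction n arbitrary: x y u)
  case 0
  then show ?case
    by (simp add: H_eq_sum_weight signed_perms_0 cyc_def weight_def)
next
  case (Suc n)
  define d s where "d = y - x" and "s = y + u - 2 * x"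
  define P D where "P = (\<Sum>j\<le>n. hcoeff k d s n j * x ^ j)"
    and "D = (\<Sum>j\<le>n. hcoeff k d s n j * (real j * x ^ (j - 1)))"
  have "(\<lambda>t. H n (x + t) (y + t) (u + t) k) = (\<lambda>t. \<Sum>j\<le>n. hcoeff k d s n j * (x + t) ^ j)"
    using Suc.IH unfolding d_def s_def by (simp add: algebra_simps)
  moreover have "((\<lambda>t. \<Sum>j\<le>n. hcoeff k d s n j * (x + t) ^ j) has_real_derivative D) (at 0)"
    unfolding D_def by (intro DERIV_sum DERIV_cmult) (auto intro!: derivative_eq_intros)
  ultimately have "deriv (\<lambda>t. H n (x + t) (y + t) (u + t) k) 0 = D"
    by (simp add: DERIV_imp_deriv)
  then have "H (Suc n) x y u k = (u + y) * H n x y u k + 2 * k * x * y * D"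
    using H_Suc[of n x y u k] by (simp only:)
  also have "\<dots> = (s + 2 * x) * P + 2 * k * x * (x + d) * D"
    unfolding Suc.IH P_def d_def[symmetric] s_def[symmetric] by (simp add: s_def d_def algebra_simps)
  finally show ?case
    unfolding P_def D_def hcoeff_poly_Suc d_def s_def .
qed

definition power_diff :: "real \<Rightarrow> real \<Rightarrow> nat \<Rightarrow> nat \<Rightarrow> real" where
  "power_diff c s n j = (\<Sum>i\<le>j. real (j choose i) * (- 1) ^ (j - i) * (s + c * real i) ^ n)"

lemma power_diff_0: "power_diff c s 0 j = (if j = 0 then 1 else 0)"
proof -
  have "power_diff c s 0 j = (1 + (- 1 :: real)) ^ j"
    unfolding power_diff_def binomial_ring by simp
  then show ?thesis
    by simp
qed

lemma power_diff_Suc_0: "power_diff c s (Suc n) 0 = s * power_diff c s n 0"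
  by (simp add: power_diff_def)

lemma of_nat_Suc_choose_absorb:
  assumes "i \<le> m"
  shows "real (Suc m choose i) * (real (Suc m) - real i) = real (Suc m) * real (m choose i)"
proof -
  have "real (Suc m - i) * real (Suc m choose i) = real (Suc m) * real (m choose i)"
    using binomial_absorb_comp[of "Suc m" i] by (metis diff_Suc_1 of_nat_mult)
  then show ?thesis
    using assms by (simp add: mult.commute)
qed

lemma power_diff_Suc_Suc:
  "power_diff c s (Suc n) (Suc m) =
     (s + c * real (Suc m)) * power_diff c s n (Suc m) + c * real (Suc m) * power_diff c s n m"
proof -
  let ?j = "Suc m"
  have "power_diff c s (Suc n) ?j - (s + c * real ?j) * power_diff c s n ?j =
      (\<Sum>i\<le>?j. real (?j choose i) * (- 1) ^ (?j - i) * (s + c * real i) ^ n * (c * (real i - real ?j)))"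
    unfolding power_diff_def by (simp add: sum_distrib_left sum_subtractf[symmetric] algebra_simps)
  also have "\<dots> = (\<Sum>i\<le>?j. c * real ?j * (real (m choose i) * (- 1) ^ (m - i) * (s + c * real i) ^ n))"
  proof (rule sum.cong[OF refl])
    fix i assume i: "i \<in> {..?j}"
    show "real (?j choose i) * (- 1) ^ (?j - i) * (s + c * real i) ^ n * (c * (real i - real ?j)) =
        c * real ?j * (real (m choose i) * (- 1) ^ (m - i) * (s + c * real i) ^ n)"
    proof (cases "i = ?j")
      case False
      then have "i \<le> m"
        using i by auto
      note absorb = of_nat_Suc_choose_absorb[OF \<open>i \<le> m\<close>]
      let ?F = "(- 1) ^ (m - i) * (s + c * real i) ^ n"
      have "?j - i = Suc (m - i)"
        using \<open>i \<le> m\<close> by simp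
      then have "real (?j choose i) * (- 1) ^ (?j - i) * (s + c * real i) ^ n * (c * (real i - real ?j))
          = c * ?F * (real (?j choose i) * (real ?j - real i))"
        by (simp add: algebra_simps)
      also have "\<dots> = c * ?F * (real ?j * real (m choose i))"
        unfolding absorb ..
      finally show ?thesis
        by (simp add: algebra_simps)
    qed simp
  qed
  also have "\<dots> = c * real ?j * power_diff c s n m"
    unfolding power_diff_def by (simp add: sum_distrib_left)
  finally show ?thesis
    by (simp add: algebra_simps)
qed

lemma gchoose_inverse_power_Suc:
  fixes k d :: real
  assumes k: "k > 0" and d: "d \<noteq> 0"
  shows "2 * (1 + k * real m) * (((- 1 / k) gchoose m) * (- 1 / d) ^ m) =
    ((- 1 / k) gchoose Suc m) * (- 1 / d) ^ Suc m * (2 * k * d) * real (Suc m)"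
proof -
  define G where "G = (\<lambda>m. (- 1 / k) gchoose m)"
  have G: "real (Suc m) * G (Suc m) = G m * (- 1 / k - real m)"
    using gbinomial_mult_1[of "- 1 / k" m] unfolding G_def by (simp add: algebra_simps)
  have D: "(- 1 / d) * (2 * k * d) = - 2 * k"
    using d by simp
  have K: "(- 1 / k - real m) * (- 2 * k) = 2 * (1 + k * real m)"
    using k by (simp add: field_simps)
  have "G (Suc m) * (- 1 / d) ^ Suc m * (2 * k * d) * real (Suc m) =
      (real (Suc m) * G (Suc m)) * (- 1 / d) ^ m * ((- 1 / d) * (2 * k * d))"
    by (simp only: power_Suc mult_ac)
  also have "\<dots> = G m * (- 1 / d) ^ m * ((- 1 / k - real m) * (- 2 * k))"
    unfolding G D by (simp only: mult_ac)
  also have "\<dots> = 2 * (1 + k * real m) * (G m * (- 1 / d) ^ m)"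
    unfolding K by (simp only: mult_ac)
  finally show ?thesis
    unfolding G_def ..
qed

lemma hcoeff_closed_form:
  assumes k: "k > 0" and d: "d \<noteq> 0"
  shows "hcoeff k d s n j = ((- 1 / k) gchoose j) * (- 1 / d) ^ j * power_diff (2 * k * d) s n j"
proof -
  define b where "b j = ((- 1 / k) gchoose j) * (- 1 / d) ^ j" for j
  have b_Suc: "2 * (1 + k * real m) * b m = b (Suc m) * (2 * k * d) * real (Suc m)" for m
    unfolding b_def by (rule gchoose_inverse_power_Suc[OF k d])
  have "hcoeff k d s n j = b j * power_diff (2 * k * d) s n j"
  proof (induction n arbitrary: j)
    case 0
    then show ?case
      by (simp add: power_diff_0 b_def)
  next
    case (Suc n)
    show ?case
    proof (cases j)
      case 0
      then show ?thesis
        using Suc.IH[of 0] by (simp add: power_diff_Suc_0 b_def)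
    next
      case (Suc m)
      have "hcoeff k d s (Suc n) j = (s + 2 * k * d * real j) * (b j * power_diff (2 * k * d) s n j)
          + 2 * (1 + k * real m) * b m * power_diff (2 * k * d) s n m"
        using Suc.IH[of j] Suc.IH[of m] \<open>j = Suc m\<close> by simp
      also have "\<dots> = b j * power_diff (2 * k * d) s (Suc n) j"
        unfolding b_Suc \<open>j = Suc m\<close> power_diff_Suc_Suc by (simp add: algebra_simps)
      finally show ?thesis .
    qed
  qed
  then show ?thesis
    by (simp add: b_def)
qed

section \<open>The exponential generating function\<close>

lemma sums_triangular_swap:
  fixes g :: "nat \<Rightarrow> nat \<Rightarrow> 'a::banach"
  assumes zero: "\<And>n j. n < j \<Longrightarrow> g n j = 0"
    and abs: "summable (\<lambda>n. \<Sum>j\<le>n. norm (g n j))"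
    and cols: "\<And>j. (\<lambda>n. g n j) sums c j"
    and "c sums L"
  shows "(\<lambda>n. \<Sum>j\<le>n. g n j) sums L"
proof -
  have row_has_sum: "(f has_sum (\<Sum>j\<le>n. f j)) UNIV"
    if "\<And>j. n < j \<Longrightarrow> f j = 0" for f :: "nat \<Rightarrow> 'b::{topological_comm_monoid_add, t2_space}" and n
    by (rule has_sum_finite_neutralI) (use that in auto)
  have row_norm: "((\<lambda>j. norm (g n j)) has_sum (\<Sum>j\<le>n. norm (g n j))) UNIV" for n
    by (rule row_has_sum) (simp add: zero)
  have "(\<lambda>(n, j). g n j) abs_summable_on UNIV \<times> UNIV"
  proof (subst abs_summable_on_Sigma_iff, intro conjI ballI)
    show "(\<lambda>j. (\<lambda>(n, j). g n j) (n, j)) abs_summable_on UNIV" for n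
      using row_norm[of n] by (auto simp: summable_on_def)
    have "infsum (\<lambda>j. norm ((\<lambda>(n, j). g n j) (n, j))) UNIV = (\<Sum>j\<le>n. norm (g n j))" for n
      using row_norm[of n] by (simp add: infsumI)
    then show "(\<lambda>n. infsum (\<lambda>j. norm ((\<lambda>(n, j). g n j) (n, j))) UNIV) abs_summable_on UNIV"
      using abs by (simp add: norm_summable_imp_summable_on sum_nonneg)
  qed
  then have summable: "(\<lambda>(n, j). g n j) summable_on UNIV \<times> UNIV"
    by (rule abs_summable_summable)
  define S where "S = infsum (\<lambda>(n, j). g n j) (UNIV \<times> UNIV)"
  have has_sum: "((\<lambda>(n, j). g n j) has_sum S) (UNIV \<times> UNIV)"
    unfolding S_def using summable by (rule has_sum_infsum)
  have col: "((\<lambda>n. g n j) has_sum c j) UNIV" for j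
  proof (rule norm_summable_imp_has_sum[OF _ cols])
    have "norm (g n j) \<le> (\<Sum>i\<le>n. norm (g n i))" for n
      by (cases "j \<le> n") (auto intro: member_le_sum sum_nonneg simp: zero)
    then show "summable (\<lambda>n. norm (g n j))"
      by (intro summable_comparison_test'[OF abs]) auto
  qed
  have "((\<lambda>(j, n). g n j) has_sum S) (UNIV \<times> UNIV)"
    using has_sum_swap[THEN iffD1, OF has_sum] by (simp add: case_prod_unfold)
  then have "(c has_sum S) UNIV"
    by (rule has_sum_SigmaD) (use col in auto)
  then have "S = L"
    using has_sum_imp_sums \<open>c sums L\<close> sums_unique2 by blast
  moreover have "((\<lambda>n. \<Sum>j\<le>n. g n j) has_sum S) UNIV"
    using has_sum by (rule has_sum_SigmaD) (auto intro: row_has_sum simp: zero)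
  ultimately show ?thesis
    using has_sum_imp_sums by blast
qed

lemma power_diff_sums:
  "(\<lambda>n. power_diff c s n j * z ^ n / fact n) sums (exp (s * z) * (exp (c * z) - 1) ^ j)"
proof -
  have exp_sums: "(\<lambda>n. a ^ n * (z ^ n / fact n)) sums exp (a * z)" for a
    using exp_converges[of "a * z"] by (simp add: power_mult_distrib divide_inverse mult_ac)
  have "(\<lambda>n. \<Sum>i\<le>j. real (j choose i) * (- 1) ^ (j - i) * ((s + c * real i) ^ n * (z ^ n / fact n)))
      sums (\<Sum>i\<le>j. real (j choose i) * (- 1) ^ (j - i) * exp ((s + c * real i) * z))"
    by (intro sums_sum sums_mult exp_sums)
  moreover have "(\<Sum>i\<le>j. real (j choose i) * (- 1) ^ (j - i) * ((s + c * real i) ^ n * (z ^ n / fact n)))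
      = power_diff c s n j * z ^ n / fact n" for n
    unfolding power_diff_def by (simp add: sum_distrib_right sum_divide_distrib mult.assoc)
  moreover have "(\<Sum>i\<le>j. real (j choose i) * (- 1) ^ (j - i) * exp ((s + c * real i) * z))
      = exp (s * z) * (exp (c * z) - 1) ^ j"
  proof -
    have "exp ((s + c * real i) * z) = exp (s * z) * exp (c * z) ^ i" for i
      by (simp add: exp_add exp_of_nat_mult[symmetric] algebra_simps)
    then show ?thesis
      using binomial_ring[of "exp (c * z)" "- 1" j] by (simp add: sum_distrib_left algebra_simps)
  qed
  ultimately show ?thesis
    by simp
qed

lemma abs_hcoeff_Suc_le:
  assumes k: "k > 0"
  shows "\<bar>hcoeff k d s (Suc n) j\<bar> \<le> (\<bar>s\<bar> + 2 * k * \<bar>d\<bar> * real j) * \<bar>hcoeff k d s n j\<bar>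
    + (if j = 0 then 0 else 2 * (1 + k * (real j - 1)) * \<bar>hcoeff k d s n (j - 1)\<bar>)"
proof -
  have "\<bar>s + 2 * k * d * real j\<bar> \<le> \<bar>s\<bar> + 2 * k * \<bar>d\<bar> * real j"
    using abs_triangle_ineq[of s "2 * k * d * real j"] k by (simp add: abs_mult)
  moreover have "0 \<le> 1 + k * (real j - 1)" if "j \<noteq> 0"
    using k that by simp
  ultimately show ?thesis
    using k by (auto simp: abs_mult intro!: abs_triangle_ineq[THEN order_trans] add_mono mult_right_mono)
qed

lemma hcoeff_abs_poly_Suc_le:
  assumes k: "k > 0"
  shows "(\<Sum>j\<le>Suc n. \<bar>hcoeff k d s (Suc n) j\<bar> * \<bar>x\<bar> ^ j) \<le>
    (\<Sum>j\<le>n. (\<bar>s\<bar> + 2 * k * \<bar>d\<bar> * real j + 2 * (1 + k * real j) * \<bar>x\<bar>) * (\<bar>hcoeff k d s n j\<bar> * \<bar>x\<bar> ^ j))"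
proof -
  define a where "a j = \<bar>hcoeff k d s n j\<bar> * \<bar>x\<bar> ^ j" for j
  have "\<bar>hcoeff k d s (Suc n) j\<bar> * \<bar>x\<bar> ^ j \<le> (\<bar>s\<bar> + 2 * k * \<bar>d\<bar> * real j) * a j +
      (if j = 0 then 0 else 2 * (1 + k * (real j - 1)) * a (j - 1) * \<bar>x\<bar>)" for j
  proof (cases j)
    case 0
    then show ?thesis
      using abs_hcoeff_Suc_le[OF k, of d s n 0] by (simp add: a_def)
  next
    case (Suc m)
    have "\<bar>hcoeff k d s (Suc n) j\<bar> * \<bar>x\<bar> ^ j \<le> ((\<bar>s\<bar> + 2 * k * \<bar>d\<bar> * real j) * \<bar>hcoeff k d s n j\<bar>
        + 2 * (1 + k * (real j - 1)) * \<bar>hcoeff k d s n m\<bar>) * \<bar>x\<bar> ^ j"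
      using mult_right_mono[OF abs_hcoeff_Suc_le[OF k, of d s n j], of "\<bar>x\<bar> ^ j"] Suc by simp
    also have "\<dots> = (\<bar>s\<bar> + 2 * k * \<bar>d\<bar> * real j) * a j + 2 * (1 + k * (real j - 1)) * a m * \<bar>x\<bar>"
      using Suc by (simp add: a_def algebra_simps)
    finally show ?thesis
      using Suc by simp
  qed
  then have "(\<Sum>j\<le>Suc n. \<bar>hcoeff k d s (Suc n) j\<bar> * \<bar>x\<bar> ^ j) \<le>
      (\<Sum>j\<le>Suc n. (\<bar>s\<bar> + 2 * k * \<bar>d\<bar> * real j) * a j) +
      (\<Sum>j\<le>Suc n. (if j = 0 then 0 else 2 * (1 + k * (real j - 1)) * a (j - 1) * \<bar>x\<bar>))"
    unfolding sum.distrib[symmetric] by (rule sum_mono)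
  also have "(\<Sum>j\<le>Suc n. (\<bar>s\<bar> + 2 * k * \<bar>d\<bar> * real j) * a j) =
      (\<Sum>j\<le>n. (\<bar>s\<bar> + 2 * k * \<bar>d\<bar> * real j) * a j)"
    by (simp add: a_def hcoeff_eq_0)
  also have "(\<Sum>j\<le>Suc n. (if j = 0 then 0 else 2 * (1 + k * (real j - 1)) * a (j - 1) * \<bar>x\<bar>)) =
      (\<Sum>j\<le>n. 2 * (1 + k * real j) * a j * \<bar>x\<bar>)"
    by (subst sum.atMost_Suc_shift) simp
  finally show ?thesis
    by (simp add: a_def sum.distrib[symmetric] algebra_simps)
qed

lemma hcoeff_abs_bound:
  assumes k: "k > 0"
  shows "(\<Sum>j\<le>n. \<bar>hcoeff k d s n j\<bar> * \<bar>x\<bar> ^ j) \<le>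
    (\<bar>s\<bar> + 2 * k * \<bar>d\<bar> + 2 * \<bar>x\<bar> + 2 * k * \<bar>x\<bar> + 1) ^ n * fact n"
proof (induction n)
  case 0
  then show ?case
    by simp
next
  case (Suc n)
  define C where "C = \<bar>s\<bar> + 2 * k * \<bar>d\<bar> + 2 * \<bar>x\<bar> + 2 * k * \<bar>x\<bar> + 1"
  have C: "0 \<le> C"
    using k by (simp add: C_def)
  have coeff: "\<bar>s\<bar> + 2 * k * \<bar>d\<bar> * real j + 2 * (1 + k * real j) * \<bar>x\<bar> \<le> C * (real n + 1)"
    if "j \<le> n" for j
  proof -
    have j: "real j \<le> real n + 1" and n: "1 \<le> real n + 1"
      using that by simp_all
    have "2 * k * \<bar>d\<bar> * real j \<le> 2 * k * \<bar>d\<bar> * (real n + 1)"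
      "2 * k * \<bar>x\<bar> * real j \<le> 2 * k * \<bar>x\<bar> * (real n + 1)"
      using k by (simp_all add: mult_left_mono j)
    moreover have "\<bar>s\<bar> + 2 * \<bar>x\<bar> + 1 \<le> (\<bar>s\<bar> + 2 * \<bar>x\<bar> + 1) * (real n + 1)"
      using mult_left_mono[OF n, of "\<bar>s\<bar> + 2 * \<bar>x\<bar> + 1"] by simp
    moreover have "C * (real n + 1) = (\<bar>s\<bar> + 2 * \<bar>x\<bar> + 1) * (real n + 1) +
        2 * k * \<bar>d\<bar> * (real n + 1) + 2 * k * \<bar>x\<bar> * (real n + 1)"
      by (simp add: C_def algebra_simps)
    moreover have "\<bar>s\<bar> + 2 * k * \<bar>d\<bar> * real j + 2 * (1 + k * real j) * \<bar>x\<bar> =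
        \<bar>s\<bar> + 2 * \<bar>x\<bar> + 2 * k * \<bar>d\<bar> * real j + 2 * k * \<bar>x\<bar> * real j"
      by (simp add: algebra_simps)
    ultimately show ?thesis
      by linarith
  qed
  have "(\<Sum>j\<le>Suc n. \<bar>hcoeff k d s (Suc n) j\<bar> * \<bar>x\<bar> ^ j) \<le>
      (\<Sum>j\<le>n. (\<bar>s\<bar> + 2 * k * \<bar>d\<bar> * real j + 2 * (1 + k * real j) * \<bar>x\<bar>) * (\<bar>hcoeff k d s n j\<bar> * \<bar>x\<bar> ^ j))"
    by (rule hcoeff_abs_poly_Suc_le[OF k])
  also have "\<dots> \<le> (\<Sum>j\<le>n. C * (real n + 1) * (\<bar>hcoeff k d s n j\<bar> * \<bar>x\<bar> ^ j))"
    by (intro sum_mono mult_right_mono coeff) auto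
  also have "\<dots> \<le> C * (real n + 1) * (C ^ n * fact n)"
    using Suc.IH C by (simp add: sum_distrib_left[symmetric] C_def mult_left_mono)
  also have "\<dots> = C ^ Suc n * fact (Suc n)"
    by (simp add: algebra_simps)
  finally show ?case
    unfolding C_def .
qed

lemma summable_hcoeff_abs:
  assumes k: "k > 0" and z: "\<bar>z\<bar> * (\<bar>s\<bar> + 2 * k * \<bar>d\<bar> + 2 * \<bar>x\<bar> + 2 * k * \<bar>x\<bar> + 1) < 1"
  shows "summable (\<lambda>n. \<Sum>j\<le>n. \<bar>hcoeff k d s n j * x ^ j * z ^ n / fact n\<bar>)"
proof (rule summable_comparison_test')
  define C where "C = \<bar>s\<bar> + 2 * k * \<bar>d\<bar> + 2 * \<bar>x\<bar> + 2 * k * \<bar>x\<bar> + 1"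
  show "summable (\<lambda>n. (\<bar>z\<bar> * C) ^ n)"
    using z k by (intro summable_geometric) (simp add: C_def)
  fix n
  have "(\<Sum>j\<le>n. \<bar>hcoeff k d s n j * x ^ j * z ^ n / fact n\<bar>) =
      (\<Sum>j\<le>n. \<bar>hcoeff k d s n j\<bar> * \<bar>x\<bar> ^ j) * \<bar>z\<bar> ^ n / fact n"
    by (simp add: abs_mult power_abs sum_distrib_right sum_divide_distrib)
  also have "\<dots> \<le> C ^ n * fact n * \<bar>z\<bar> ^ n / fact n"
    using hcoeff_abs_bound[OF k, of d s n x] unfolding C_def
    by (intro divide_right_mono mult_right_mono) auto
  also have "\<dots> = (\<bar>z\<bar> * C) ^ n"
    by (simp add: power_mult_distrib)
  finally show "norm (\<Sum>j\<le>n. \<bar>hcoeff k d s n j * x ^ j * z ^ n / fact n\<bar>) \<le> (\<bar>z\<bar> * C) ^ n"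
    by (simp add: sum_nonneg)
qed

lemma hcoeff_egf:
  assumes "k > 0" and "d \<noteq> 0"
  shows "(\<lambda>n. hcoeff k d s n j * z ^ n / fact n) sums
    (((- 1 / k) gchoose j) * (- 1 / d) ^ j * (exp (s * z) * (exp (2 * k * d * z) - 1) ^ j))"
  using sums_mult[OF power_diff_sums, of "((- 1 / k) gchoose j) * (- 1 / d) ^ j" "2 * k * d" s j z]
  by (simp add: hcoeff_closed_form[OF assms] mult.assoc)

lemma hcoeff_poly_egf:
  assumes k: "k > 0" and d: "d \<noteq> 0"
    and z: "\<bar>z\<bar> * (\<bar>s\<bar> + 2 * k * \<bar>d\<bar> + 2 * \<bar>x\<bar> + 2 * k * \<bar>x\<bar> + 1) < 1"
    and t: "\<bar>x * (exp (2 * k * d * z) - 1) / d\<bar> < 1"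
  shows "(\<lambda>n. (\<Sum>j\<le>n. hcoeff k d s n j * x ^ j) * z ^ n / fact n) sums
    (exp (s * z) * (1 - x * (exp (2 * k * d * z) - 1) / d) powr (- 1 / k))"
proof -
  define c where "c = 2 * k * d"
  define t where "t = - x * (exp (c * z) - 1) / d"
  define g where "g n j = hcoeff k d s n j * x ^ j * z ^ n / fact n" for n j
  have "(\<lambda>n. \<Sum>j\<le>n. g n j) sums (exp (s * z) * (1 + t) powr (- 1 / k))"
  proof (rule sums_triangular_swap)
    show "g n j = 0" if "n < j" for n j
      using that by (simp add: g_def hcoeff_eq_0)
    show "summable (\<lambda>n. \<Sum>j\<le>n. norm (g n j))"
      using summable_hcoeff_abs[OF k z] by (simp add: g_def)
    have "t = (- 1 / d) * x * (exp (c * z) - 1)"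
      unfolding t_def by simp
    then have "t ^ j = (- 1 / d) ^ j * x ^ j * (exp (c * z) - 1) ^ j" for j
      by (simp only: power_mult_distrib)
    then show "(\<lambda>n. g n j) sums (exp (s * z) * (((- 1 / k) gchoose j) * t ^ j))" for j
      using sums_mult[OF hcoeff_egf[OF k d, of s j z], of "x ^ j"]
      by (simp add: g_def c_def algebra_simps)
    have "\<bar>t\<bar> < 1"
      using t by (simp add: t_def c_def abs_minus_commute)
    then show "(\<lambda>j. exp (s * z) * (((- 1 / k) gchoose j) * t ^ j)) sums (exp (s * z) * (1 + t) powr (- 1 / k))"
      by (intro sums_mult gen_binomial_real)
  qed
  moreover have "(\<Sum>j\<le>n. g n j) = (\<Sum>j\<le>n. hcoeff k d s n j * x ^ j) * z ^ n / fact n" for n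
    by (simp add: g_def sum_distrib_right sum_divide_distrib)
  moreover have "1 + t = 1 - x * (exp (2 * k * d * z) - 1) / d"
    by (simp add: t_def c_def)
  ultimately show ?thesis
    by simp
qed

lemma closed_form_eq_exp_powr:
  fixes x y u k z :: real
  assumes k: "k > 0" and xy: "x \<noteq> y" and q: "0 < 1 - x * (exp (2 * k * (y - x) * z) - 1) / (y - x)"
  shows "((y - x) * exp (k * z * (y + u - 2 * x)) / (y - x * exp (2 * k * z * (y - x)))) powr (1 / k)
    = exp ((y + u - 2 * x) * z) * (1 - x * (exp (2 * k * (y - x) * z) - 1) / (y - x)) powr (- 1 / k)"
proof -
  define q where "q = 1 - x * (exp (2 * k * (y - x) * z) - 1) / (y - x)"
  have "y - x * exp (2 * k * z * (y - x)) = (y - x) * q"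
    unfolding q_def using xy by (simp add: field_simps)
  then have "(y - x) * exp (k * z * (y + u - 2 * x)) / (y - x * exp (2 * k * z * (y - x))) =
      exp (k * z * (y + u - 2 * x)) / q"
    using xy by simp
  moreover have "exp (k * z * (y + u - 2 * x)) powr (1 / k) = exp ((y + u - 2 * x) * z)"
    using k by (simp add: exp_powr_real)
  moreover have "q powr (- 1 / k) = 1 / q powr (1 / k)"
    using powr_minus_divide[of q "1 / k"] by simp
  ultimately show ?thesis
    using q by (simp add: powr_divide q_def[symmetric])
qed

lemma H_egf_closed_form:
  fixes x y u k z :: real
  assumes k: "k > 0" and xy: "x \<noteq> y"
    and z: "\<bar>z\<bar> * (\<bar>y + u - 2 * x\<bar> + 2 * k * \<bar>y - x\<bar> + 2 * \<bar>x\<bar> + 2 * k * \<bar>x\<bar> + 1) < 1"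
    and t: "\<bar>x * (exp (2 * k * (y - x) * z) - 1) / (y - x)\<bar> < 1"
  shows "(\<lambda>n. H n x y u k * z ^ n / fact n) sums
    (((y - x) * exp (k * z * (y + u - 2 * x)) / (y - x * exp (2 * k * z * (y - x)))) powr (1 / k))"
proof -
  have "y - x \<noteq> 0"
    using xy by simp
  from hcoeff_poly_egf[OF k this z t] have "(\<lambda>n. H n x y u k * z ^ n / fact n) sums
      (exp ((y + u - 2 * x) * z) * (1 - x * (exp (2 * k * (y - x) * z) - 1) / (y - x)) powr (- 1 / k))"
    by (simp add: H_eq_hcoeff_poly)
  moreover have "0 < 1 - x * (exp (2 * k * (y - x) * z) - 1) / (y - x)"
    using t by linarith
  ultimately show ?thesis
    by (simp add: closed_form_eq_exp_powr[OF k xy])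
qed

theorem lemma12:
  fixes x y u k :: real
  assumes "k > 0" and "x \<noteq> y"
  shows "\<exists>r>0. \<forall>z::real. \<bar>z\<bar> < r \<longrightarrow>
    (\<lambda>n. H n x y u k * z ^ n / fact n) sums
      (((y - x) * exp (k * z * (y + u - 2 * x)) / (y - x * exp (2 * k * z * (y - x)))) powr (1 / k))"
proof -
  define C where "C = \<bar>y + u - 2 * x\<bar> + 2 * k * \<bar>y - x\<bar> + 2 * \<bar>x\<bar> + 2 * k * \<bar>x\<bar> + 1"
  have "((\<lambda>z. \<bar>z\<bar> * C) \<longlongrightarrow> 0) (nhds 0)"
    and "((\<lambda>z. \<bar>x * (exp (2 * k * (y - x) * z) - 1) / (y - x)\<bar>) \<longlongrightarrow> 0) (nhds 0)"
    using assms(2) by (auto intro!: tendsto_eq_intros filterlim_ident)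
  then have "\<forall>\<^sub>F z in nhds 0. \<bar>z\<bar> * C < 1 \<and> \<bar>x * (exp (2 * k * (y - x) * z) - 1) / (y - x)\<bar> < 1"
    by (intro eventually_conj order_tendstoD(2)) auto
  then obtain r where "r > 0"
    and "\<And>z. \<bar>z\<bar> < r \<Longrightarrow> \<bar>z\<bar> * C < 1 \<and> \<bar>x * (exp (2 * k * (y - x) * z) - 1) / (y - x)\<bar> < 1"
    unfolding eventually_nhds_metric dist_real_def by auto
  then show ?thesis
    using H_egf_closed_form[OF assms] unfolding C_def by blast
qed

end
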